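(* Let $G$ be a finite, simple, connected graph with vertex set $V$ and maximum degree $m$, and let $\sigma:V\to V$ be an involution of $G$. Let $v\in V$ with $v':=\sigma(v)\neq v$, and let $d=d(v,v')$ be the graph distance between $v$ and $v'$. For a real number $Q$, let $H=A_G+D_Q$ where the potential is $Q$ at $v$ and at $v'$ and $0$ at every other vertex. Then for every $Q\ge m$, $$F(Q)>1-\frac{16\sqrt{m+1}}{\sqrt{Q}},$$ and moreover this lower bound is attained by $p(t)$ at some time $t\ge 0$ with $t=O\big(Q^{d-1}\big)$ as $Q\to\infty$.
   Context: $A_G$ is the adjacency matrix of $G$ and $D_Q$ is the diagonal matrix whose diagonal entries are the potential values at the vertices. An involution of $G$ is a bijection $\sigma:V\to V$ with $\sigma\circ\sigma=\mathrm{id}$ such that $x\sim y$ implies $\sigma(x)\sim\sigma(y)$ (and which preserves the potential; here the potential is $Q$ on $\{v,v'\}$ and $0$ elsewhere, so this holds automatically). The transfer probability from $v$ to $v'$ at time $t$ is $p(t)=|\langle e_v, e^{itH} e_{v'}\rangle|^2$, where $e_x$ is the standard basis vector of vertex $x$, and the fidelity is $F(Q)=\sup_{t\ge 0}p(t)$. *)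

theory Defs
  imports "HOL-Analysis.Analysis" "HOL-Library.Landau_Symbols"
begin

definition simple_graph :: "('n \<Rightarrow> 'n \<Rightarrow> bool) \<Rightarrow> bool" where
  "simple_graph E \<longleftrightarrow> (\<forall>x y. E x y \<longrightarrow> E y x) \<and> (\<forall>x. \<not> E x x)"

definition connected_graph :: "('n \<Rightarrow> 'n \<Rightarrow> bool) \<Rightarrow> bool" where
  "connected_graph E \<longleftrightarrow> (\<forall>x y. E\<^sup>*\<^sup>* x y)"

definition degree :: "('n \<Rightarrow> 'n \<Rightarrow> bool) \<Rightarrow> 'n \<Rightarrow> nat" where
  "degree E x = card {y. E x y}"

definition max_degree :: "('n::finite \<Rightarrow> 'n \<Rightarrow> bool) \<Rightarrow> nat" where
  "max_degree E = Max (range (degree E))"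

definition graph_dist :: "('n \<Rightarrow> 'n \<Rightarrow> bool) \<Rightarrow> 'n \<Rightarrow> 'n \<Rightarrow> nat" where
  "graph_dist E x y = (LEAST n. (E ^^ n) x y)"

definition involution :: "('n \<Rightarrow> 'n \<Rightarrow> bool) \<Rightarrow> ('n \<Rightarrow> 'n) \<Rightarrow> bool" where
  "involution E \<sigma> \<longleftrightarrow> \<sigma> \<circ> \<sigma> = id \<and> (\<forall>x y. E x y \<longrightarrow> E (\<sigma> x) (\<sigma> y))"

definition adj_matrix :: "('n::finite \<Rightarrow> 'n \<Rightarrow> bool) \<Rightarrow> complex^'n^'n" where
  "adj_matrix E = (\<chi> i j. if E i j then 1 else 0)"

definition potential_matrix :: "real \<Rightarrow> 'n::finite \<Rightarrow> 'n \<Rightarrow> complex^'n^'n" where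
  "potential_matrix Q v v' = (\<chi> i j. if i = j \<and> (i = v \<or> i = v') then complex_of_real Q else 0)"

definition hamiltonian :: "('n::finite \<Rightarrow> 'n \<Rightarrow> bool) \<Rightarrow> real \<Rightarrow> 'n \<Rightarrow> 'n \<Rightarrow> complex^'n^'n" where
  "hamiltonian E Q v v' = adj_matrix E + potential_matrix Q v v'"

definition mat_exp :: "complex^'n::finite^'n \<Rightarrow> complex^'n^'n" where
  "mat_exp M = (\<Sum>k. (1 / fact k) *\<^sub>R (((**) M) ^^ k) (mat 1))"

definition cscale_mat :: "complex \<Rightarrow> complex^'n::finite^'n \<Rightarrow> complex^'n^'n" where
  "cscale_mat c M = (\<chi> i j. c * M $ i $ j)"

definition transfer_prob ::
  "('n::finite \<Rightarrow> 'n \<Rightarrow> bool) \<Rightarrow> real \<Rightarrow> 'n \<Rightarrow> 'n \<Rightarrow> real \<Rightarrow> real" where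
  "transfer_prob E Q v v' t =
     (cmod (mat_exp (cscale_mat (\<i> * complex_of_real t) (hamiltonian E Q v v')) $ v $ v'))\<^sup>2"

definition fidelity :: "('n::finite \<Rightarrow> 'n \<Rightarrow> bool) \<Rightarrow> real \<Rightarrow> 'n \<Rightarrow> 'n \<Rightarrow> real" where
  "fidelity E Q v v' = (SUP t\<in>{0..}. transfer_prob E Q v v' t)"

end

theory Submission
  imports Defs
begin

text \<open>The involution splits \<open>real^'n\<close> into \<open>\<sigma>\<close>-even and \<open>\<sigma>\<close>-odd vectors, both invariant
  under the real symmetric Hamiltonian H. Testing with e_v + e_v' and e_v - e_v' shows that the top
  eigenvalues lp (even class) and lm (odd class) are at least Q - m, while the quadratic form of H
  exceeds that of the adjacency matrix only by Q (z_v^2 + z_v'^2); so the top eigenvectors x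
  (nonnegative, by Perron-Frobenius) and y both put weight at least 1/2 - m/Q on v. Expanding e_v
  and e_v' along x, y and their orthogonal complement, the amplitude <e_v, exp(itH) e_v'> is
  x_v^2 exp(it lp) - y_v^2 exp(it lm) up to an error of at most 1 - x_v^2 - y_v^2; at the half
  period t = pi / (lp - lm) the two terms add up, and the transfer probability is at least
  (1 - 4m/Q)^2 >= 1 - 8m/Q, which beats the claimed bound (that bound is negative for Q < 4m + 1).
  To bound t, the ground state transform with respect to the positive vector x writes lp - lm as a
  sum of squared jumps of y/x along edges; on a shortest walk of length d from v to v' some jump is
  at least 2 y_v / (d x_v), and x decays by at most the factor lp <= 2Q per step, so lp - lm is of
  order Q^(1-d) and t = O(Q^(d-1)).\<close>

section \<open>The matrix exponential\<close>

typedef (overloaded) ('n::finite) endo = "UNIV :: ((complex^'n) \<Rightarrow>\<^sub>L (complex^'n)) set"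
  morphisms endo_apply Endo by auto

setup_lifting type_definition_endo

text \<open>Bounded operators on \<open>complex^'n\<close> under composition form a Banach algebra; this gives
  access to the library's \<open>exp\<close> and in particular to \<open>exp (- A) * exp A = 1\<close>.\<close>

instantiation endo :: (finite) real_normed_algebra_1
begin
lift_definition norm_endo :: "'a endo \<Rightarrow> real" is norm .
lift_definition minus_endo :: "'a endo \<Rightarrow> 'a endo \<Rightarrow> 'a endo" is "(-)" .
lift_definition uminus_endo :: "'a endo \<Rightarrow> 'a endo" is "uminus" .
lift_definition plus_endo :: "'a endo \<Rightarrow> 'a endo \<Rightarrow> 'a endo" is "(+)" .
lift_definition zero_endo :: "'a endo" is "0" .
lift_definition scaleR_endo :: "real \<Rightarrow> 'a endo \<Rightarrow> 'a endo" is "scaleR" .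
lift_definition times_endo :: "'a endo \<Rightarrow> 'a endo \<Rightarrow> 'a endo" is "\<lambda>a b. a o\<^sub>L b" .
lift_definition one_endo :: "'a endo" is "id_blinfun" .
definition dist_endo :: "'a endo \<Rightarrow> 'a endo \<Rightarrow> real"
  where "dist_endo a b = norm (a - b)"
definition uniformity_endo :
  "(uniformity :: ('a endo \<times> 'a endo) filter) = (INF e\<in>{0 <..}. principal {(x, y). dist x y < e})"
definition open_endo :: "'a endo set \<Rightarrow> bool"
  where "open_endo S = (\<forall>x\<in>S. \<forall>\<^sub>F (x', y) in uniformity. x' = x \<longrightarrow> y \<in> S)"
definition sgn_endo :: "'a endo \<Rightarrow> 'a endo"
  where "sgn_endo x = scaleR (inverse (norm x)) x"
instance
proof
  have ne: "(1::complex^'a) \<noteq> 0" by (metis one_neq_zero vec_eq_iff zero_index one_index)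
  show "(0::'a endo) \<noteq> 1"
  proof transfer
    show "0 \<noteq> (id_blinfun :: (complex^'a) \<Rightarrow>\<^sub>L (complex^'a))"
    proof
      assume "0 = (id_blinfun :: (complex^'a) \<Rightarrow>\<^sub>L (complex^'a))"
      then have "blinfun_apply (0 :: (complex^'a) \<Rightarrow>\<^sub>L (complex^'a)) 1 = id_blinfun 1" by simp
      then show False using ne by simp
    qed
  qed
  show "norm (1::'a endo) = 1" by transfer (use ne in \<open>metis norm_blinfun_id\<close>)
next
  fix a b c :: "'a endo" and r s :: real
  show "a * b * c = a * (b * c)" by transfer (rule blinfun_eqI, simp add: blinfun.bilinear_simps)
  show "(a + b) * c = a * c + b * c" by transfer (rule blinfun_eqI, simp add: blinfun.bilinear_simps)
  show "a * (b + c) = a * b + a * c" by transfer (rule blinfun_eqI, simp add: blinfun.bilinear_simps)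
  show "1 * a = a" by transfer (rule blinfun_eqI, simp add: blinfun.bilinear_simps)
  show "a * 1 = a" by transfer (rule blinfun_eqI, simp add: blinfun.bilinear_simps)
  show "r *\<^sub>R a * b = r *\<^sub>R (a * b)" by transfer (rule blinfun_eqI, simp add: blinfun.bilinear_simps)
  show "a * r *\<^sub>R b = r *\<^sub>R (a * b)" by transfer (rule blinfun_eqI, simp add: blinfun.bilinear_simps)
  show "norm (a * b) \<le> norm a * norm b" by transfer (rule norm_blinfun_compose)
  show "a + b + c = a + (b + c)" by transfer (rule add.assoc)
  show "a + b = b + a" by transfer (rule add.commute)
  show "0 + a = a" by transfer simp
  show "- a + a = 0" by transfer simp
  show "a - b = a + - b" by transfer simp
  show "r *\<^sub>R (a + b) = r *\<^sub>R a + r *\<^sub>R b" by transfer (simp add: scaleR_right_distrib)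
  show "(r + s) *\<^sub>R a = r *\<^sub>R a + s *\<^sub>R a" by transfer (simp add: scaleR_left_distrib)
  show "r *\<^sub>R s *\<^sub>R a = (r * s) *\<^sub>R a" by transfer simp
  show "1 *\<^sub>R a = a" by transfer simp
  show "dist a b = norm (a - b)" by (simp add: dist_endo_def)
  show "sgn a = inverse (norm a) *\<^sub>R a" by (simp add: sgn_endo_def)
  show "(norm a = 0) = (a = 0)" by transfer simp
  show "norm (a + b) \<le> norm a + norm b" by transfer (rule norm_triangle_ineq)
  show "norm (r *\<^sub>R a) = \<bar>r\<bar> * norm a" by transfer simp
next
  show "(uniformity :: ('a endo \<times> 'a endo) filter) = (INF e\<in>{0 <..}. principal {(x, y). dist x y < e})"
    by (rule uniformity_endo)
  show "open U = (\<forall>x\<in>U. \<forall>\<^sub>F (x', y) in uniformity. x' = x \<longrightarrow> y \<in> U)" for U :: "'a endo set"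
    by (rule open_endo_def)
qed
end

instance endo :: (finite) banach
proof
  fix X :: "nat \<Rightarrow> 'a endo"
  assume "Cauchy X"
  then have "Cauchy (\<lambda>n. endo_apply (X n))"
    unfolding Cauchy_def dist_norm dist_endo_def by (simp add: minus_endo.rep_eq norm_endo.rep_eq)
  then obtain L where "(\<lambda>n. endo_apply (X n)) \<longlonglongrightarrow> L"
    using Cauchy_convergent_iff convergent_def by blast
  then have "X \<longlonglongrightarrow> Endo L"
    unfolding tendsto_iff dist_norm dist_endo_def
    by (simp add: minus_endo.rep_eq norm_endo.rep_eq Endo_inverse)
  then show "convergent X" by (auto simp: convergent_def)
qed

definition endo_of_matrix :: "complex^'n::finite^'n \<Rightarrow> 'n endo" where
  "endo_of_matrix M = Endo (Blinfun (\<lambda>x. M *v x))"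

lemma endo_apply_endo_of_matrix [simp]: "endo_apply (endo_of_matrix M) x = M *v x"
  by (simp add: endo_of_matrix_def Endo_inverse bounded_linear_Blinfun_apply)

lemma endo_apply_times [simp]: "endo_apply (A * B) x = endo_apply A (endo_apply B x)"
  by (simp add: times_endo.rep_eq)

lemma endo_apply_one [simp]: "endo_apply 1 x = x"
  by (simp add: one_endo.rep_eq)

lemma endo_apply_scaleR [simp]: "endo_apply (c *\<^sub>R A) x = c *\<^sub>R endo_apply A x"
  by (simp add: scaleR_endo.rep_eq blinfun.scaleR_left)

lemma endo_of_matrix_uminus: "endo_of_matrix (- M) = - endo_of_matrix M"
  by (rule endo_apply_inject[THEN iffD1], rule blinfun_eqI)
     (simp add: blinfun.minus_left uminus_endo.rep_eq matrix_vector_mult_def vec_eq_iff sum_negf)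

lemma endo_apply_power: "endo_apply (endo_of_matrix M ^ k) x = (((**) M ^^ k) (mat 1)) *v x"
  by (induction k arbitrary: x) (simp_all add: matrix_vector_mul_assoc)

lemma bounded_linear_endo_apply: "bounded_linear (\<lambda>A::'n::finite endo. endo_apply A x)"
proof -
  have "bounded_linear (endo_apply :: 'n endo \<Rightarrow> _)"
    by (rule bounded_linear_intro[where K=1])
       (auto simp: plus_endo.rep_eq scaleR_endo.rep_eq norm_endo.rep_eq)
  then show ?thesis by (rule bounded_linear_compose[OF blinfun.bounded_linear_left])
qed

lemma exp_endo_sums: "(\<lambda>k. endo_apply (A ^ k /\<^sub>R fact k) x) sums endo_apply (exp A) x"
  by (rule bounded_linear.sums[OF bounded_linear_endo_apply exp_converges])

lemma matrix_vector_mult_axis_nth: "((M::'a::semiring_1^'n::finite^'m) *v axis j 1) $ i = M $ i $ j"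
  by (simp add: matrix_vector_mult_def axis_def if_distrib cong: if_cong)

lemma mat_exp_eq_exp_endo:
  fixes M :: "complex^'n::finite^'n"
  shows "mat_exp M *v x = endo_apply (exp (endo_of_matrix M)) x"
proof -
  define S where "S k = (1 / fact k) *\<^sub>R (((**) M ^^ k) (mat 1))" for k
  have terms: "S k *v y = endo_apply (endo_of_matrix M ^ k /\<^sub>R fact k) y" for k y
    by (simp add: S_def endo_apply_power divide_inverse_commute matrix_vector_mult_def vec_eq_iff
        scaleR_sum_right)
  have summable: "summable S"
  proof -
    have "(\<lambda>k. S k $ i $ j) sums (endo_apply (exp (endo_of_matrix M)) (axis j 1) $ i)" for i j
      using bounded_linear.sums[OF bounded_linear_vec_nth[of i] exp_endo_sums[of "endo_of_matrix M" "axis j 1"]]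
      by (simp only: terms[symmetric] matrix_vector_mult_axis_nth)
    moreover have "(\<lambda>n. sum S {..<n}) = (\<lambda>n. \<chi> i j. \<Sum>k<n. S k $ i $ j)"
      by (auto simp: vec_eq_iff)
    ultimately have "S sums (\<chi> i j. endo_apply (exp (endo_of_matrix M)) (axis j 1) $ i)"
      unfolding sums_def by (simp add: tendsto_vec_lambda)
    then show ?thesis by (auto simp: summable_def)
  qed
  have linear: "bounded_linear (\<lambda>N::complex^'n^'n. N *v x)"
    by (rule linear_conv_bounded_linear[THEN iffD1], rule linearI)
       (simp_all add: matrix_vector_mult_def vec_eq_iff sum.distrib algebra_simps scaleR_sum_right)
  have "(\<lambda>k. S k *v x) sums (mat_exp M *v x)"
    unfolding mat_exp_def S_def[symmetric]
    using bounded_linear.sums[OF linear summable_sums[OF summable]] by simp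
  moreover have "(\<lambda>k. S k *v x) sums endo_apply (exp (endo_of_matrix M)) x"
    unfolding terms by (rule exp_endo_sums)
  ultimately show ?thesis using sums_unique2 by blast
qed

definition cinner :: "complex^'n::finite \<Rightarrow> complex^'n \<Rightarrow> complex" where
  "cinner a b = (\<Sum>i\<in>UNIV. cnj (a $ i) * b $ i)"


lemma cinner_scaleR_left [simp]: "cinner (c *\<^sub>R a) b = of_real c * cinner a b"
  by (simp add: cinner_def sum_distrib_left algebra_simps scaleR_conv_of_real[where 'a=complex] vector_scaleR_component)
lemma cinner_scaleR_right [simp]: "cinner a (c *\<^sub>R b) = of_real c * cinner a b"
  by (simp add: cinner_def sum_distrib_left algebra_simps scaleR_conv_of_real[where 'a=complex] vector_scaleR_component)
lemma cinner_smult_left [simp]: "cinner (c *s a) b = cnj c * cinner a b"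
  by (simp add: cinner_def sum_distrib_left algebra_simps)
lemma cinner_smult_right [simp]: "cinner a (c *s b) = c * cinner a b"
  by (simp add: cinner_def sum_distrib_left algebra_simps)
lemma cinner_add_left [simp]: "cinner (a + a') b = cinner a b + cinner a' b"
  by (simp add: cinner_def sum.distrib algebra_simps)
lemma cinner_add_right [simp]: "cinner a (b + b') = cinner a b + cinner a b'"
  by (simp add: cinner_def sum.distrib algebra_simps)
lemma cinner_diff_left [simp]: "cinner (a - a') b = cinner a b - cinner a' b"
  by (simp add: cinner_def sum_subtractf algebra_simps)

lemma bounded_linear_cinner_left: "bounded_linear (\<lambda>a. cinner a b)"
  by (rule linear_conv_bounded_linear[THEN iffD1], rule linearI) (simp_all add: scaleR_conv_of_real[where 'a=complex])

lemma bounded_linear_cinner_right: "bounded_linear (cinner a)"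
  by (rule linear_conv_bounded_linear[THEN iffD1], rule linearI) (simp_all add: scaleR_conv_of_real[where 'a=complex])

lemma cinner_axis_left [simp]: "cinner (axis i 1) b = b $ i"
proof -
  have "cinner (axis i 1) b = (\<Sum>j\<in>UNIV. if j = i then b $ j else 0)"
    unfolding cinner_def by (rule sum.cong) (auto simp: axis_def)
  then show ?thesis by simp
qed

lemma cinner_self: "cinner a a = of_real ((norm a)\<^sup>2)"
proof -
  have "cnj (a $ i) * a $ i = of_real ((norm (a $ i))\<^sup>2)" for i
    by (subst complex_norm_square) (simp add: mult.commute)
  then have "cinner a a = of_real (\<Sum>i\<in>UNIV. (norm (a $ i))\<^sup>2)"
    unfolding cinner_def of_real_sum by simp
  also have "(\<Sum>i\<in>UNIV. (norm (a $ i))\<^sup>2) = (norm a)\<^sup>2"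
    by (simp add: norm_vec_def L2_set_def sum_nonneg)
  finally show ?thesis .
qed

lemma norm_cinner_le: "cmod (cinner a b) \<le> norm a * norm b"
proof -
  have "cmod (cinner a b) \<le> (\<Sum>i\<in>UNIV. cmod (cnj (a $ i) * b $ i))"
    unfolding cinner_def by (rule norm_sum)
  also have "\<dots> = (\<Sum>i\<in>UNIV. cmod (a $ i) * cmod (b $ i))"
    by (simp add: norm_mult)
  also have "\<dots> \<le> L2_set (\<lambda>i. cmod (a $ i)) UNIV * L2_set (\<lambda>i. cmod (b $ i)) UNIV"
    using L2_set_mult_ineq[of "\<lambda>i. cmod (a $ i)" "\<lambda>i. cmod (b $ i)" UNIV] by simp
  finally show ?thesis by (simp add: norm_vec_def)
qed

lemma mat_exp_eigenvector:
  assumes "M *v w = \<mu> *s w"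
  shows "mat_exp M *v w = exp \<mu> *s w"
proof -
  have "endo_apply (endo_of_matrix M ^ k) w = (\<mu> ^ k) *s w" for k
    by (induction k) (simp_all add: vector_scalar_commute assms vector_smult_assoc mult.commute)
  then have "endo_apply (endo_of_matrix M ^ k /\<^sub>R fact k) w = (\<mu> ^ k /\<^sub>R fact k) *s w" for k
    by (simp add: blinfun.scaleR_left vec_eq_iff scaleR_conv_of_real[where 'a=complex])
  moreover have "bounded_linear (\<lambda>c::complex. c *s w)"
    by (rule linear_conv_bounded_linear[THEN iffD1], rule linearI)
       (simp_all add: vec_eq_iff algebra_simps scaleR_conv_of_real[where 'a=complex])
  ultimately have "(\<lambda>k. endo_apply (endo_of_matrix M ^ k /\<^sub>R fact k) w) sums (exp \<mu> *s w)"
    using bounded_linear.sums[OF _ exp_converges] by simp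
  then show ?thesis
    unfolding mat_exp_eq_exp_endo using exp_endo_sums sums_unique2 by blast
qed

lemma mat_exp_adjoint:
  assumes adjoint: "\<And>w r. cinner w (M *v r) = cinner (N *v w) r"
  shows "cinner w (mat_exp M *v r) = cinner (mat_exp N *v w) r"
proof -
  let ?A = "endo_of_matrix M" and ?B = "endo_of_matrix N"
  have powers: "cinner w (endo_apply (?A ^ k) r) = cinner (endo_apply (?B ^ k) w) r" for k
  proof (induction k arbitrary: w)
    case 0 then show ?case by simp
  next
    case (Suc k)
    have "cinner w (endo_apply (?A ^ Suc k) r) = cinner (N *v w) (endo_apply (?A ^ k) r)"
      by (simp add: adjoint)
    also have "\<dots> = cinner (endo_apply (?B ^ Suc k) w) r"
      by (simp only: Suc power_Suc2 endo_apply_times endo_apply_endo_of_matrix)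
    finally show ?case .
  qed
  have "(\<lambda>k. cinner w (endo_apply (?A ^ k /\<^sub>R fact k) r)) sums cinner w (endo_apply (exp ?A) r)"
    by (rule bounded_linear.sums[OF bounded_linear_cinner_right exp_endo_sums])
  moreover have "(\<lambda>k. cinner (endo_apply (?B ^ k /\<^sub>R fact k) w) r) sums cinner (endo_apply (exp ?B) w) r"
    by (rule bounded_linear.sums[OF bounded_linear_cinner_left exp_endo_sums])
  ultimately show ?thesis
    unfolding mat_exp_eq_exp_endo using powers
    by (simp add: blinfun.scaleR_left sums_unique2)
qed

lemma mat_exp_isometry:
  assumes skew: "\<And>w r. cinner w (M *v r) = cinner ((- M) *v w) r"
  shows "norm (mat_exp M *v r) = norm r"
proof -
  let ?A = "endo_of_matrix M"
  have "of_real ((norm (mat_exp M *v r))\<^sup>2) = cinner (mat_exp M *v r) (mat_exp M *v r)"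
    by (simp only: cinner_self)
  also have "\<dots> = cinner (mat_exp (- M) *v (mat_exp M *v r)) r"
    by (rule mat_exp_adjoint[OF skew])
  also have "mat_exp (- M) *v (mat_exp M *v r) = endo_apply (exp (- ?A) * exp ?A) r"
    by (simp add: mat_exp_eq_exp_endo endo_of_matrix_uminus)
  also have "exp (- ?A) * exp ?A = 1"
    using exp_minus_inverse[of "- ?A"] by simp
  finally have "of_real ((norm (mat_exp M *v r))\<^sup>2) = (of_real ((norm r)\<^sup>2) :: complex)"
    by (simp add: cinner_self)
  then have "(norm (mat_exp M *v r))\<^sup>2 = (norm r)\<^sup>2"
    by (simp only: of_real_eq_iff)
  then show ?thesis by (simp add: power2_eq_iff_nonneg)
qed


section \<open>Rayleigh quotients of a symmetric kernel\<close>

lemma quadratic_nonpos_imp_linear_coeff_zero: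
  fixes a b :: real
  assumes nonpos: "\<And>e. a * e + b * e\<^sup>2 \<le> 0"
  shows "a = 0"
proof (rule ccontr)
  assume "a \<noteq> 0"
  define c where "c = \<bar>b\<bar> + 1"
  define e where "e = a / c"
  have "c > 0" by (simp add: c_def add_pos_nonneg)
  have "- \<bar>b\<bar> * e\<^sup>2 \<le> b * e\<^sup>2" by (rule mult_right_mono) simp_all
  moreover have "a * e - \<bar>b\<bar> * e\<^sup>2 = a * e - (c - 1) * e\<^sup>2" by (simp add: c_def)
  moreover have "a * e - (c - 1) * e\<^sup>2 = a\<^sup>2 / c\<^sup>2"
    using \<open>c > 0\<close> by (simp add: e_def field_simps power2_eq_square)
  moreover have "a\<^sup>2 / c\<^sup>2 > 0" using \<open>a \<noteq> 0\<close> \<open>c > 0\<close> by simp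
  ultimately show False using nonpos[of e] by linarith
qed

locale sym_kernel =
  fixes h :: "'n::finite \<Rightarrow> 'n \<Rightarrow> real"
  assumes kernel_sym: "h i j = h j i"
begin

definition hmult :: "real^'n \<Rightarrow> real^'n" where
  "hmult z = (\<chi> i. \<Sum>j\<in>UNIV. h i j * z $ j)"

definition quad :: "real^'n \<Rightarrow> real" where
  "quad z = z \<bullet> hmult z"

lemma hmult_nth: "hmult z $ i = (\<Sum>j\<in>UNIV. h i j * z $ j)"
  by (simp add: hmult_def)

lemma hmult_add: "hmult (z + w) = hmult z + hmult w"
  by (simp add: vec_eq_iff hmult_nth algebra_simps sum.distrib)

lemma hmult_scaleR: "hmult (c *\<^sub>R z) = c *\<^sub>R hmult z"
  by (simp add: vec_eq_iff hmult_nth algebra_simps sum_distrib_left)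

lemma inner_hmult: "w \<bullet> hmult z = (\<Sum>i\<in>UNIV. \<Sum>j\<in>UNIV. h i j * w $ i * z $ j)"
  by (simp add: inner_vec_def hmult_nth sum_distrib_left algebra_simps)

lemma quad_eq_sum: "quad z = (\<Sum>i\<in>UNIV. \<Sum>j\<in>UNIV. h i j * z $ i * z $ j)"
  by (simp add: quad_def inner_hmult)

lemma inner_hmult_commute: "w \<bullet> hmult z = z \<bullet> hmult w"
  unfolding inner_hmult
  by (subst sum.swap) (simp add: kernel_sym mult.commute mult.left_commute)

lemma quad_scaleR: "quad (c *\<^sub>R z) = c\<^sup>2 * quad z"
  by (simp add: quad_def hmult_scaleR power2_eq_square)

lemma quad_eigenvector: "hmult z = l *\<^sub>R z \<Longrightarrow> norm z = 1 \<Longrightarrow> quad z = l"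
  by (simp add: quad_def power2_norm_eq_inner[symmetric])

lemma continuous_on_quad: "continuous_on S quad"
proof -
  have "bounded_linear hmult"
    by (rule linear_conv_bounded_linear[THEN iffD1], rule linearI) (simp_all add: hmult_add hmult_scaleR)
  then show ?thesis
    unfolding quad_def
    by (intro continuous_on_inner continuous_on_id bounded_linear.continuous_on[of hmult])
qed

lemma exists_unit_maximizer:
  assumes "subspace S" "u \<in> S" "u \<noteq> 0"
  obtains z where "z \<in> S" "norm z = 1" "\<forall>u\<in>S. quad u \<le> quad z * (u \<bullet> u)"
proof -
  define K where "K = S \<inter> sphere 0 1"
  have "compact K"
    unfolding K_def by (rule closed_Int_compact[OF closed_subspace[OF \<open>subspace S\<close>] compact_sphere])
  moreover have "(1 / norm u) *\<^sub>R u \<in> K"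
    unfolding K_def using assms by (auto simp: subspace_scale)
  ultimately obtain z where zK: "z \<in> K" and zmax: "\<forall>y\<in>K. quad y \<le> quad z"
    using continuous_attains_sup[OF _ _ continuous_on_quad] by blast
  have "quad w \<le> quad z * (w \<bullet> w)" if "w \<in> S" for w
  proof (cases "w = 0")
    case True then show ?thesis by (simp add: quad_def)
  next
    case False
    then have "(1 / norm w) *\<^sub>R w \<in> K" unfolding K_def using \<open>subspace S\<close> \<open>w \<in> S\<close>
      by (auto simp: subspace_scale)
    then have "quad ((1 / norm w) *\<^sub>R w) \<le> quad z" using zmax by blast
    then have "quad w / (norm w)\<^sup>2 \<le> quad z" by (simp add: quad_scaleR power_divide)
    then show ?thesis using False by (simp add: divide_le_eq power2_norm_eq_inner)
  qed
  then show ?thesis using that zK unfolding K_def by auto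
qed

lemma maximizer_is_eigenvector:
  assumes "subspace S" and invariant: "hmult ` S \<subseteq> S" and "z \<in> S"
    and max: "\<forall>u\<in>S. quad u \<le> \<mu> * (u \<bullet> u)" and attained: "quad z = \<mu> * (z \<bullet> z)"
  shows "hmult z = \<mu> *\<^sub>R z"
proof -
  define w where "w = hmult z - \<mu> *\<^sub>R z"
  have "w \<in> S"
    unfolding w_def using assms by (auto intro: subspace_diff subspace_scale)
  have "2 * (w \<bullet> w) * e + (quad w - \<mu> * (w \<bullet> w)) * e\<^sup>2 \<le> 0" for e
  proof -
    have "z + e *\<^sub>R w \<in> S" using \<open>subspace S\<close> \<open>z \<in> S\<close> \<open>w \<in> S\<close>
      by (simp add: subspace_add subspace_scale)
    then have "quad (z + e *\<^sub>R w) \<le> \<mu> * ((z + e *\<^sub>R w) \<bullet> (z + e *\<^sub>R w))" using max by blast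
    moreover have "quad (z + e *\<^sub>R w) = quad z + 2 * e * (w \<bullet> hmult z) + e\<^sup>2 * quad w"
      unfolding quad_def using inner_hmult_commute[of z w]
      by (simp add: hmult_add hmult_scaleR inner_add_left inner_add_right power2_eq_square algebra_simps)
    moreover have "(z + e *\<^sub>R w) \<bullet> (z + e *\<^sub>R w) = z \<bullet> z + 2 * e * (w \<bullet> z) + e\<^sup>2 * (w \<bullet> w)"
      by (simp add: inner_add_left inner_add_right power2_eq_square algebra_simps inner_commute[of z w])
    moreover have "w \<bullet> hmult z = w \<bullet> w + \<mu> * (w \<bullet> z)"
      by (simp add: w_def inner_diff_right inner_diff_left algebra_simps inner_commute)
    ultimately show ?thesis using attained
      by (simp add: algebra_simps power2_eq_square inner_commute[of z w])
  qed
  then have "2 * (w \<bullet> w) = 0" by (rule quadratic_nonpos_imp_linear_coeff_zero)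
  then show ?thesis unfolding w_def by simp
qed

lemma ground_state_identity:
  assumes eig: "hmult x = l *\<^sub>R x" and pos: "\<And>i. x $ i > 0"
  shows "l * (y \<bullet> y) - quad y
     = (1/2) * (\<Sum>i\<in>UNIV. \<Sum>j\<in>UNIV. h i j * x $ i * x $ j * (y $ i / x $ i - y $ j / x $ j)\<^sup>2)"
proof -
  have row: "(\<Sum>j\<in>UNIV. h i j * x $ j) = l * x $ i" for i
    using arg_cong[OF eig, of "\<lambda>v. v $ i"] by (simp add: hmult_nth)
  have diagonal: "(\<Sum>i\<in>UNIV. \<Sum>j\<in>UNIV. h i j * x $ j * ((y $ i)\<^sup>2 / x $ i)) = l * (y \<bullet> y)"
  proof -
    have "(\<Sum>i\<in>UNIV. \<Sum>j\<in>UNIV. h i j * x $ j * ((y $ i)\<^sup>2 / x $ i))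
        = (\<Sum>i\<in>UNIV. ((y $ i)\<^sup>2 / x $ i) * (l * x $ i))"
      by (simp add: row[symmetric] sum_distrib_left sum_divide_distrib mult_ac)
    also have "\<dots> = (\<Sum>i\<in>UNIV. l * (y $ i)\<^sup>2)"
      using pos by (intro sum.cong) (auto simp: less_imp_neq[symmetric])
    finally show ?thesis
      by (simp add: inner_vec_def sum_distrib_left power2_eq_square)
  qed
  have diagonal': "(\<Sum>i\<in>UNIV. \<Sum>j\<in>UNIV. h i j * x $ i * ((y $ j)\<^sup>2 / x $ j)) = l * (y \<bullet> y)"
    using diagonal by (subst sum.swap) (simp add: kernel_sym mult.commute mult.left_commute)
  have expand: "h i j * x $ i * x $ j * (y $ i / x $ i - y $ j / x $ j)\<^sup>2
     = h i j * x $ j * ((y $ i)\<^sup>2 / x $ i) + h i j * x $ i * ((y $ j)\<^sup>2 / x $ j)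
       - 2 * (h i j * y $ i * y $ j)" for i j
    using pos[of i] pos[of j] by (simp add: power2_diff field_simps power2_eq_square)
  show ?thesis
    unfolding expand sum.distrib sum_subtractf sum_distrib_left[symmetric] diagonal diagonal'
      quad_eq_sum[of y]
    by (simp add: mult.assoc)
qed

end

section \<open>Spectrum of the Hamiltonian of a graph with an involution\<close>

lemma telescoping_large_step:
  fixes f :: "nat \<Rightarrow> real"
  assumes "d > 0"
  shows "\<exists>k<d. \<bar>f 0 - f d\<bar> / d \<le> \<bar>f k - f (Suc k)\<bar>"
proof (rule ccontr)
  assume "\<not> ?thesis"
  then have small: "\<bar>f k - f (Suc k)\<bar> < \<bar>f 0 - f d\<bar> / d" if "k < d" for k
    using that by auto
  have "\<bar>f 0 - f d\<bar> = \<bar>\<Sum>k<d. f k - f (Suc k)\<bar>" by (simp add: sum_lessThan_telescope')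
  also have "\<dots> \<le> (\<Sum>k<d. \<bar>f k - f (Suc k)\<bar>)" by (rule sum_abs)
  also have "\<dots> < (\<Sum>k<d. \<bar>f 0 - f d\<bar> / d)" using assms small by (intro sum_strict_mono) auto
  also have "\<dots> = \<bar>f 0 - f d\<bar>" using assms by simp
  finally show False by simp
qed

locale involutive_graph =
  fixes E :: "'n::finite \<Rightarrow> 'n \<Rightarrow> bool" and \<sigma> :: "'n \<Rightarrow> 'n" and v :: 'n and Q :: real
  assumes simple: "simple_graph E" and connected: "connected_graph E"
    and invol: "involution E \<sigma>" and moved: "\<sigma> v \<noteq> v" and Q_nonneg: "Q \<ge> 0"
begin

abbreviation "v' \<equiv> \<sigma> v"
abbreviation "m \<equiv> real (max_degree E)"

definition ham :: "'n \<Rightarrow> 'n \<Rightarrow> real" where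
  "ham i j = (if E i j then 1 else 0) + (if i = j \<and> (i = v \<or> i = v') then Q else 0)"

lemma edge_sym: "E i j \<Longrightarrow> E j i"
  using simple unfolding simple_graph_def by blast

sublocale sym_kernel ham
  by unfold_locales (auto simp: ham_def intro: edge_sym)

lemma sigma_sigma [simp]: "\<sigma> (\<sigma> i) = i"
  using invol unfolding involution_def by (metis comp_apply id_apply)

lemma sigma_eq_iff: "\<sigma> a = b \<longleftrightarrow> a = \<sigma> b"
  by auto

lemma sum_reindex_sigma: "(\<Sum>j\<in>UNIV. f (\<sigma> j)) = (\<Sum>j\<in>UNIV. f j)"
proof -
  have "bij \<sigma>" by (rule o_bij[of \<sigma>]) (auto simp: fun_eq_iff)
  then show ?thesis by (rule sum.reindex_bij_betw)
qed

lemma edge_sigma_iff: "E (\<sigma> i) (\<sigma> j) \<longleftrightarrow> E i j"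
  using invol unfolding involution_def by (metis sigma_sigma)

lemma ham_sigma: "ham (\<sigma> i) (\<sigma> j) = ham i j"
  unfolding ham_def edge_sigma_iff sigma_eq_iff by auto

lemma ham_nonneg: "ham i j \<ge> 0"
  unfolding ham_def using Q_nonneg by auto

lemma ham_edge: "E i j \<Longrightarrow> ham i j \<ge> 1"
  unfolding ham_def using Q_nonneg by auto

definition even_vecs :: "(real^'n) set" where
  "even_vecs = {z. \<forall>i. z $ (\<sigma> i) = z $ i}"

definition odd_vecs :: "(real^'n) set" where
  "odd_vecs = {z. \<forall>i. z $ (\<sigma> i) = - z $ i}"

lemma subspace_even_vecs: "subspace even_vecs"
  by (auto simp: subspace_def even_vecs_def)

lemma subspace_odd_vecs: "subspace odd_vecs"
  by (auto simp: subspace_def odd_vecs_def)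

lemma hmult_sigma: "hmult z $ (\<sigma> i) = (\<Sum>j\<in>UNIV. ham i j * z $ (\<sigma> j))"
  unfolding hmult_nth using sum_reindex_sigma[of "\<lambda>j. ham (\<sigma> i) j * z $ j"]
  by (simp add: ham_sigma)

lemma hmult_even_vecs: "hmult ` even_vecs \<subseteq> even_vecs"
  by (auto simp: even_vecs_def hmult_sigma hmult_nth[symmetric])

lemma hmult_odd_vecs: "hmult ` odd_vecs \<subseteq> odd_vecs"
  by (auto simp: odd_vecs_def hmult_sigma hmult_nth[symmetric] sum_negf)

lemma even_odd_orthogonal: "x \<in> even_vecs \<Longrightarrow> y \<in> odd_vecs \<Longrightarrow> x \<bullet> y = 0"
  using sum_reindex_sigma[of "\<lambda>j. x $ j * y $ j"]
  by (simp add: inner_vec_def even_vecs_def odd_vecs_def sum_negf)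

definition adj_form :: "real^'n \<Rightarrow> real" where
  "adj_form z = (\<Sum>i\<in>UNIV. \<Sum>j\<in>UNIV. (if E i j then 1 else 0) * z $ i * z $ j)"

lemma quad_split: "quad z = Q * ((z $ v)\<^sup>2 + (z $ v')\<^sup>2) + adj_form z"
proof -
  have "(\<Sum>j\<in>UNIV. (if i = j \<and> (i = v \<or> i = v') then Q else 0) * z $ i * z $ j)
      = (if i = v \<or> i = v' then Q * (z $ i)\<^sup>2 else 0)" for i
    by (subst sum.cong[OF refl, where h = "\<lambda>j. if j = i then (if i = v \<or> i = v' then Q * (z $ i)\<^sup>2 else 0) else 0"])
       (auto simp: power2_eq_square)
  then have "quad z = adj_form z + (\<Sum>i\<in>UNIV. if i = v \<or> i = v' then Q * (z $ i)\<^sup>2 else 0)"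
    unfolding quad_eq_sum adj_form_def ham_def by (simp add: distrib_right sum.distrib)
  also have "(\<Sum>i\<in>UNIV. if i = v \<or> i = v' then Q * (z $ i)\<^sup>2 else 0) = (\<Sum>i\<in>{v, v'}. Q * (z $ i)\<^sup>2)"
    by (subst sum.If_cases) (auto intro: sum.cong)
  finally show ?thesis using moved by (simp add: algebra_simps)
qed

lemma degree_le_max_degree: "real (card {j. E i j}) \<le> m"
  unfolding max_degree_def degree_def[symmetric] by simp

lemma abs_adj_form_le: "\<bar>adj_form z\<bar> \<le> m * (z \<bullet> z)"
proof -
  define a where "a i j = (if E i j then 1 else 0 :: real)" for i j
  have a_sym: "a i j = a j i" for i j unfolding a_def using edge_sym by auto
  have "\<bar>adj_form z\<bar> \<le> (\<Sum>i\<in>UNIV. \<Sum>j\<in>UNIV. \<bar>a i j * z $ i * z $ j\<bar>)"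
    unfolding adj_form_def a_def by (rule order_trans[OF sum_abs sum_mono[OF sum_abs]])
  also have "\<dots> \<le> (\<Sum>i\<in>UNIV. \<Sum>j\<in>UNIV. a i j * (z $ i)\<^sup>2 / 2 + a i j * (z $ j)\<^sup>2 / 2)"
  proof (intro sum_mono)
    fix i j
    have "2 * \<bar>z $ i\<bar> * \<bar>z $ j\<bar> \<le> \<bar>z $ i\<bar>\<^sup>2 + \<bar>z $ j\<bar>\<^sup>2" by (rule sum_squares_bound)
    then show "\<bar>a i j * z $ i * z $ j\<bar> \<le> a i j * (z $ i)\<^sup>2 / 2 + a i j * (z $ j)\<^sup>2 / 2"
      by (auto simp: a_def abs_mult)
  qed
  also have "\<dots> = (\<Sum>i\<in>UNIV. \<Sum>j\<in>UNIV. a i j * (z $ i)\<^sup>2)"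
  proof -
    have "(\<Sum>i\<in>UNIV. \<Sum>j\<in>UNIV. a i j * (z $ j)\<^sup>2) = (\<Sum>i\<in>UNIV. \<Sum>j\<in>UNIV. a i j * (z $ i)\<^sup>2)"
      by (subst sum.swap) (simp add: a_sym)
    then show ?thesis by (simp add: sum.distrib sum_divide_distrib[symmetric])
  qed
  also have "\<dots> = (\<Sum>i\<in>UNIV. real (card {j. E i j}) * (z $ i)\<^sup>2)"
    by (simp add: a_def sum_distrib_right[symmetric] sum.If_cases)
  also have "\<dots> \<le> (\<Sum>i\<in>UNIV. m * (z $ i)\<^sup>2)"
    by (intro sum_mono mult_right_mono degree_le_max_degree) simp
  also have "\<dots> = m * (z \<bullet> z)"
    by (simp add: inner_vec_def sum_distrib_left power2_eq_square)
  finally show ?thesis .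
qed

lemma sq_v_le_inner: "(z $ v)\<^sup>2 + (z $ v')\<^sup>2 \<le> z \<bullet> z"
proof -
  have "(z $ v)\<^sup>2 + (z $ v')\<^sup>2 = (\<Sum>i\<in>{v, v'}. (z $ i)\<^sup>2)" using moved by simp
  also have "\<dots> \<le> (\<Sum>i\<in>UNIV. (z $ i)\<^sup>2)" by (rule sum_mono2) auto
  finally show ?thesis by (simp add: inner_vec_def power2_eq_square)
qed

lemma eigenvalue_le_weight:
  assumes "hmult z = l *\<^sub>R z" "norm z = 1"
  shows "l \<le> Q * ((z $ v)\<^sup>2 + (z $ v')\<^sup>2) + m" "l \<le> Q + m"
proof -
  have "z \<bullet> z = 1" using assms(2) by (simp add: power2_norm_eq_inner[symmetric])
  then have "l \<le> Q * ((z $ v)\<^sup>2 + (z $ v')\<^sup>2) + m"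
    using quad_eigenvector[OF assms] quad_split[of z] abs_adj_form_le[of z] by simp
  moreover have "Q * ((z $ v)\<^sup>2 + (z $ v')\<^sup>2) \<le> Q"
    using sq_v_le_inner[of z] \<open>z \<bullet> z = 1\<close> Q_nonneg by (simp add: mult_left_le)
  ultimately show "l \<le> Q * ((z $ v)\<^sup>2 + (z $ v')\<^sup>2) + m" "l \<le> Q + m" by simp_all
qed

lemma sigma_eq_v_iff: "\<sigma> i = v \<longleftrightarrow> i = v'" "\<sigma> i = v' \<longleftrightarrow> i = v"
  by (metis sigma_sigma)+

definition test_vec :: "real \<Rightarrow> real^'n" where
  "test_vec s = axis v 1 + s *\<^sub>R axis v' 1"

lemma test_vec_nth: "test_vec s $ i = (if i = v then 1 else if i = v' then s else 0)"
  using moved by (auto simp: test_vec_def axis_def)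

lemma inner_test_vec: "s\<^sup>2 = 1 \<Longrightarrow> test_vec s \<bullet> test_vec s = 2"
proof -
  have "test_vec s \<bullet> test_vec s = (\<Sum>i\<in>{v, v'}. test_vec s $ i * test_vec s $ i)"
    unfolding inner_vec_def inner_real_def by (intro sum.mono_neutral_right) (auto simp: test_vec_nth)
  then show "s\<^sup>2 = 1 \<Longrightarrow> ?thesis" using moved by (simp add: test_vec_nth power2_eq_square)
qed

lemma quad_test_vec_ge: "s\<^sup>2 = 1 \<Longrightarrow> quad (test_vec s) \<ge> 2 * Q - 2 * m"
  using quad_split[of "test_vec s"] abs_adj_form_le[of "test_vec s"] inner_test_vec[of s] moved
  by (simp add: test_vec_nth)

text \<open>Perron--Frobenius on the even vectors: replacing a maximizer by its absolute value
  does not decrease \<open>quad\<close>, because all entries of \<open>ham\<close> are nonnegative.\<close>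

lemma even_top_eigenvector:
  obtains x lp where "x \<in> even_vecs" "norm x = 1" "\<forall>i. x $ i \<ge> 0"
    "hmult x = lp *\<^sub>R x" "lp \<ge> Q - m"
proof -
  define u where "u = test_vec 1"
  have u: "u \<in> even_vecs" "u \<bullet> u = 2" "quad u \<ge> 2 * Q - 2 * m"
    using inner_test_vec[of 1] quad_test_vec_ge[of 1]
    by (auto simp: u_def even_vecs_def test_vec_nth sigma_eq_v_iff)
  then obtain z where z: "z \<in> even_vecs" "norm z = 1"
    and max: "\<forall>u\<in>even_vecs. quad u \<le> quad z * (u \<bullet> u)"
    using u(2) by (auto intro: exists_unit_maximizer[OF subspace_even_vecs u(1)])
  define x where "x = (\<chi> i. \<bar>z $ i\<bar>)"
  have "x \<in> even_vecs" using z(1) by (auto simp: even_vecs_def x_def)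
  have "x \<bullet> x = z \<bullet> z"
    unfolding x_def inner_vec_def by (simp add: abs_mult_self_eq)
  then have xx: "x \<bullet> x = 1"
    using z(2) by (simp add: power2_norm_eq_inner[symmetric])
  have "quad z \<le> quad x"
    unfolding quad_eq_sum
  proof (intro sum_mono)
    fix i j
    have "ham i j * z $ i * z $ j \<le> \<bar>ham i j * z $ i * z $ j\<bar>" by simp
    also have "\<dots> = ham i j * x $ i * x $ j" using ham_nonneg[of i j] by (simp add: x_def abs_mult)
    finally show "ham i j * z $ i * z $ j \<le> ham i j * x $ i * x $ j" .
  qed
  then have "quad x = quad z" using max \<open>x \<in> even_vecs\<close> xx by force
  then have "hmult x = quad x *\<^sub>R x"
    using max xx by (intro maximizer_is_eigenvector[OF subspace_even_vecs hmult_even_vecs \<open>x \<in> even_vecs\<close>]) auto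
  moreover have "quad x \<ge> Q - m" using max u \<open>quad x = quad z\<close> by force
  moreover have "norm x = 1" using xx by (simp add: norm_eq_sqrt_inner)
  moreover have "\<forall>i. x $ i \<ge> 0" by (simp add: x_def)
  ultimately show ?thesis using that \<open>x \<in> even_vecs\<close> by blast
qed

lemma odd_top_eigenvector:
  obtains y lm where "y \<in> odd_vecs" "norm y = 1" "hmult y = lm *\<^sub>R y" "lm \<ge> Q - m"
proof -
  define u where "u = test_vec (- 1)"
  have u: "u \<in> odd_vecs" "u \<bullet> u = 2" "quad u \<ge> 2 * Q - 2 * m"
    using inner_test_vec[of "- 1"] quad_test_vec_ge[of "- 1"] moved
    by (auto simp: u_def odd_vecs_def test_vec_nth sigma_eq_v_iff)
  then obtain y where y: "y \<in> odd_vecs" "norm y = 1"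
    and max: "\<forall>u\<in>odd_vecs. quad u \<le> quad y * (u \<bullet> u)"
    using u(2) by (auto intro: exists_unit_maximizer[OF subspace_odd_vecs u(1)])
  have "hmult y = quad y *\<^sub>R y"
    using max y by (intro maximizer_is_eigenvector[OF subspace_odd_vecs hmult_odd_vecs])
      (auto simp: power2_norm_eq_inner[symmetric])
  moreover have "quad y \<ge> Q - m" using max u by force
  ultimately show ?thesis using that y by blast
qed

lemma eigenvector_edge_step:
  assumes eig: "hmult x = lp *\<^sub>R x" and nonneg: "\<forall>i. x $ i \<ge> 0" and "E u w"
  shows "x $ w \<le> lp * x $ u"
proof -
  have "x $ w \<le> ham u w * x $ w"
    using ham_edge[OF \<open>E u w\<close>] nonneg[rule_format, of w] by (simp add: mult_le_cancel_right1)
  also have "\<dots> \<le> (\<Sum>j\<in>UNIV. ham u j * x $ j)"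
    by (rule member_le_sum) (auto intro: mult_nonneg_nonneg ham_nonneg nonneg[rule_format])
  also have "\<dots> = lp * x $ u"
    using arg_cong[OF eig, of "\<lambda>z. z $ u"] by (simp add: hmult_nth)
  finally show ?thesis .
qed

lemma eigenvector_positive:
  assumes eig: "hmult x = lp *\<^sub>R x" and nonneg: "\<forall>i. x $ i \<ge> 0"
    and "x $ v > 0" and "lp > 0"
  shows "x $ u > 0"
proof -
  have "E\<^sup>*\<^sup>* v u" using connected unfolding connected_graph_def by blast
  then show ?thesis
  proof (induction rule: rtranclp_induct)
    case base then show ?case by (rule \<open>x $ v > 0\<close>)
  next
    case (step w u)
    then have "0 < lp * x $ u"
      using eigenvector_edge_step[OF eig nonneg edge_sym[OF step(2)]] by linarith
    then show ?case using \<open>lp > 0\<close> by (simp add: zero_less_mult_iff)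
  qed
qed

lemma eigenvector_decay_along_walk:
  assumes eig: "hmult x = lp *\<^sub>R x" and nonneg: "\<forall>i. x $ i \<ge> 0" and "lp > 0"
    and walk: "\<forall>k<d. E (p k) (p (Suc k))" and "k \<le> d"
  shows "x $ p k \<ge> x $ p 0 / lp ^ k"
  using \<open>k \<le> d\<close>
proof (induction k)
  case 0 then show ?case by simp
next
  case (Suc k)
  then have "k < d" by simp
  then have "x $ p 0 / lp ^ k \<le> lp * x $ p (Suc k)"
    using Suc eigenvector_edge_step[OF eig nonneg edge_sym[OF walk[rule_format, OF \<open>k < d\<close>]]]
    by simp
  then show ?case using \<open>lp > 0\<close> by (simp add: field_simps)
qed

lemma eigenvalue_gap_ge_edge:
  assumes eigx: "hmult x = lp *\<^sub>R x" and pos: "\<forall>i. x $ i > 0"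
    and eigy: "hmult y = lm *\<^sub>R y" and "norm y = 1" and "E u w"
  shows "x $ u * x $ w * (y $ u / x $ u - y $ w / x $ w)\<^sup>2 / 2 \<le> lp - lm"
proof -
  define G where "G i j = ham i j * x $ i * x $ j * (y $ i / x $ i - y $ j / x $ j)\<^sup>2" for i j
  have G_nonneg: "G i j \<ge> 0" for i j
    unfolding G_def using ham_nonneg pos by (simp add: less_imp_le)
  have "0 \<le> x $ u * x $ w * (y $ u / x $ u - y $ w / x $ w)\<^sup>2"
    using pos by (simp add: less_imp_le)
  then have "x $ u * x $ w * (y $ u / x $ u - y $ w / x $ w)\<^sup>2 \<le> G u w"
    using mult_right_mono[OF ham_edge[OF \<open>E u w\<close>]] by (simp add: G_def mult.assoc)
  also have "\<dots> \<le> (\<Sum>j\<in>UNIV. G u j)"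
    by (rule member_le_sum) (auto intro: G_nonneg)
  also have "\<dots> \<le> (\<Sum>i\<in>UNIV. \<Sum>j\<in>UNIV. G i j)"
    by (rule member_le_sum[of _ _ "\<lambda>i. \<Sum>j\<in>UNIV. G i j"]) (auto intro: sum_nonneg G_nonneg)
  also have "\<dots> = 2 * (lp * (y \<bullet> y) - quad y)"
    using ground_state_identity[OF eigx, of y] pos unfolding G_def by (simp add: algebra_simps)
  also have "lp * (y \<bullet> y) - quad y = lp - lm"
    using quad_eigenvector[OF eigy \<open>norm y = 1\<close>] \<open>norm y = 1\<close>
    by (simp add: power2_norm_eq_inner[symmetric])
  finally show ?thesis by simp
qed

lemma eigenvalue_gap_lower_bound:
  assumes eigx: "hmult x = lp *\<^sub>R x" and pos: "\<forall>i. x $ i > 0" and "x \<in> even_vecs"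
    and eigy: "hmult y = lm *\<^sub>R y" and "norm y = 1" and "y \<in> odd_vecs"
    and walk: "(E ^^ d) v v'" and "d > 0" and "lp > 0"
  shows "2 * (y $ v)\<^sup>2 / ((real d)\<^sup>2 * lp ^ (d - 1)) \<le> lp - lm"
proof -
  define a where "a = x $ v"
  define b where "b = y $ v"
  have "a > 0" and nonneg: "\<forall>i. x $ i \<ge> 0" using pos by (auto simp: a_def less_imp_le)
  have "x $ v' = a" "y $ v' = - b"
    using \<open>x \<in> even_vecs\<close> \<open>y \<in> odd_vecs\<close> by (auto simp: a_def b_def even_vecs_def odd_vecs_def)
  obtain p where p: "p 0 = v" "p d = v'" and steps: "\<forall>k<d. E (p k) (p (Suc k))"
    using walk by (auto simp: relpowp_fun_conv)
  define f where "f k = y $ p k / x $ p k" for k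
  have "\<bar>f 0 - f d\<bar> = 2 * \<bar>b\<bar> / a"
    using \<open>a > 0\<close> \<open>x $ v' = a\<close> \<open>y $ v' = - b\<close> by (simp add: f_def p a_def b_def abs_mult)
  then obtain k where "k < d" and jump: "2 * \<bar>b\<bar> / a / d \<le> \<bar>f k - f (Suc k)\<bar>"
    using telescoping_large_step[OF \<open>d > 0\<close>, of f] by auto
  have near: "a / lp ^ k \<le> x $ p k"
    using eigenvector_decay_along_walk[OF eigx nonneg \<open>lp > 0\<close> steps, of k] \<open>k < d\<close>
    by (simp add: p a_def)
  have far: "a / lp ^ (d - Suc k) \<le> x $ p (Suc k)"
  proof -
    have "\<forall>j<d. E (p (d - j)) (p (d - Suc j))"
    proof (intro allI impI)
      fix j assume "j < d"
      then have "d - Suc j < d" "Suc (d - Suc j) = d - j" by auto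
      then show "E (p (d - j)) (p (d - Suc j))" using steps edge_sym by metis
    qed
    then show ?thesis
      using eigenvector_decay_along_walk[OF eigx nonneg \<open>lp > 0\<close>, of d "\<lambda>j. p (d - j)" "d - Suc k"]
        \<open>k < d\<close> by (simp add: p \<open>x $ v' = a\<close> Suc_diff_Suc)
  qed
  have "a\<^sup>2 / lp ^ (d - 1) = (a / lp ^ k) * (a / lp ^ (d - Suc k))"
    using \<open>k < d\<close> by (simp add: power2_eq_square power_add[symmetric])
  also have "\<dots> \<le> x $ p k * x $ p (Suc k)"
    using near far \<open>a > 0\<close> \<open>lp > 0\<close> nonneg by (intro mult_mono) auto
  finally have weights: "a\<^sup>2 / lp ^ (d - 1) \<le> x $ p k * x $ p (Suc k)" .
  have "(2 * \<bar>b\<bar> / a / d)\<^sup>2 \<le> (f k - f (Suc k))\<^sup>2"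
    using power_mono[OF jump, of 2] \<open>a > 0\<close> by simp
  then have "a\<^sup>2 / lp ^ (d - 1) * (2 * \<bar>b\<bar> / a / d)\<^sup>2 \<le> x $ p k * x $ p (Suc k) * (f k - f (Suc k))\<^sup>2"
    using weights \<open>a > 0\<close> \<open>lp > 0\<close> nonneg by (intro mult_mono) auto
  also have "\<dots> \<le> 2 * (lp - lm)"
    using eigenvalue_gap_ge_edge[OF eigx pos eigy \<open>norm y = 1\<close> steps[rule_format, OF \<open>k < d\<close>]]
    by (simp add: f_def)
  also have "a\<^sup>2 / lp ^ (d - 1) * (2 * \<bar>b\<bar> / a / d)\<^sup>2 = 2 * (2 * b\<^sup>2 / ((real d)\<^sup>2 * lp ^ (d - 1)))"
    using \<open>a > 0\<close> \<open>d > 0\<close> by (simp add: power_divide power_mult_distrib)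
  finally show ?thesis by (simp add: b_def)
qed

end


section \<open>Two-mode approximation of the time evolution\<close>

lemma orthonormal_residual:
  fixes x y p :: "'a::real_inner"
  assumes "x \<bullet> x = 1" "y \<bullet> y = 1" "x \<bullet> y = 0"
  defines "r \<equiv> p - (p \<bullet> x) *\<^sub>R x - (p \<bullet> y) *\<^sub>R y"
  shows "r \<bullet> x = 0" "r \<bullet> y = 0" "r \<bullet> r = p \<bullet> p - (p \<bullet> x)\<^sup>2 - (p \<bullet> y)\<^sup>2"
proof -
  have "y \<bullet> x = 0" using assms(3) by (simp add: inner_commute)
  then show rx: "r \<bullet> x = 0" and ry: "r \<bullet> y = 0"
    using assms(1-3) by (simp_all add: r_def inner_diff_left)
  have "r \<bullet> r = r \<bullet> p"
    using rx ry by (simp add: r_def inner_diff_right)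
  then show "r \<bullet> r = p \<bullet> p - (p \<bullet> x)\<^sup>2 - (p \<bullet> y)\<^sup>2"
    by (simp add: r_def inner_diff_left inner_commute[of x p] inner_commute[of y p] power2_eq_square)
qed

definition cvec :: "real^'n::finite \<Rightarrow> complex^'n" where
  "cvec z = (\<chi> i. complex_of_real (z $ i))"

lemma cvec_nth [simp]: "cvec z $ i = of_real (z $ i)"
  by (simp add: cvec_def)

lemma cvec_add: "cvec (p + q) = cvec p + cvec q"
  by (simp add: vec_eq_iff)

lemma cvec_diff: "cvec (p - q) = cvec p - cvec q"
  by (simp add: vec_eq_iff)

lemma cvec_scaleR: "cvec (c *\<^sub>R p) = of_real c *s cvec p"
  by (simp add: vec_eq_iff)

lemma cinner_cvec: "cinner (cvec p) (cvec q) = of_real (p \<bullet> q)"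
  by (simp add: cinner_def inner_vec_def)

lemma norm_cvec: "norm (cvec p) = norm p"
  by (simp add: norm_vec_def)

lemma axis_eq_cvec: "axis i (1::complex) = cvec (axis i 1)"
  by (simp add: vec_eq_iff axis_def)

text \<open>The two square roots are the norms of the components of \<open>p\<close> and \<open>q\<close> orthogonal to both
  modes.\<close>

lemma two_mode_amplitude:
  fixes M :: "complex^'n::finite^'n"
  assumes skew: "\<And>w r. cinner w (M *v r) = cinner ((- M) *v w) r"
    and eigx: "M *v cvec x = \<mu> *s cvec x" and eigy: "M *v cvec y = \<nu> *s cvec y"
    and "x \<bullet> x = 1" "y \<bullet> y = 1" "x \<bullet> y = 0" "p \<bullet> p = 1" "q \<bullet> q = 1"
  obtains err where
    "cinner (cvec p) (mat_exp M *v cvec q)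
       = of_real ((p \<bullet> x) * (q \<bullet> x)) * exp \<mu> + of_real ((p \<bullet> y) * (q \<bullet> y)) * exp \<nu> + err"
    "cmod err \<le> sqrt (1 - (p \<bullet> x)\<^sup>2 - (p \<bullet> y)\<^sup>2) * sqrt (1 - (q \<bullet> x)\<^sup>2 - (q \<bullet> y)\<^sup>2)"
proof -
  define r where "r = p - (p \<bullet> x) *\<^sub>R x - (p \<bullet> y) *\<^sub>R y"
  define r' where "r' = q - (q \<bullet> x) *\<^sub>R x - (q \<bullet> y) *\<^sub>R y"
  note residual_r = orthonormal_residual[OF \<open>x \<bullet> x = 1\<close> \<open>y \<bullet> y = 1\<close> \<open>x \<bullet> y = 0\<close>, of p, folded r_def]
  note residual_r' = orthonormal_residual[OF \<open>x \<bullet> x = 1\<close> \<open>y \<bullet> y = 1\<close> \<open>x \<bullet> y = 0\<close>, of q, folded r'_def]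
  let ?U = "\<lambda>w. mat_exp M *v w"
  have backward: "mat_exp (- M) *v cvec z = exp (- l) *s cvec z" if "M *v cvec z = l *s cvec z" for z l
    by (rule mat_exp_eigenvector) (simp add: matrix_vector_mult_def vec_eq_iff sum_negf that[symmetric])
  have mode_orth: "cinner (cvec z) (?U (cvec r')) = 0" if "M *v cvec z = l *s cvec z" "r' \<bullet> z = 0" for z l
    using that by (simp add: mat_exp_adjoint[OF skew] backward[OF that(1)] cinner_cvec inner_commute)
  define err where "err = cinner (cvec r) (?U (cvec r'))"
  have "?U (cvec q) = of_real (q \<bullet> x) *s (exp \<mu> *s cvec x) + of_real (q \<bullet> y) *s (exp \<nu> *s cvec y)
      + ?U (cvec r')"
    by (simp add: r'_def cvec_add cvec_diff cvec_scaleR matrix_vector_right_distrib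
        matrix_vector_mult_diff_distrib vector_scalar_commute
        mat_exp_eigenvector[OF eigx] mat_exp_eigenvector[OF eigy] vector_smult_assoc)
  then have "cinner (cvec p) (?U (cvec q))
      = of_real ((p \<bullet> x) * (q \<bullet> x)) * exp \<mu> + of_real ((p \<bullet> y) * (q \<bullet> y)) * exp \<nu> + err"
    using mode_orth[OF eigx residual_r'(1)] mode_orth[OF eigy residual_r'(2)]
    by (simp add: err_def r_def cvec_add cvec_diff cvec_scaleR cinner_cvec inner_commute mult_ac)
  moreover have "cmod err \<le> norm r * norm r'"
    using norm_cinner_le[of "cvec r" "?U (cvec r')"]
    by (simp add: err_def norm_cvec mat_exp_isometry[OF skew])
  moreover have "norm r = sqrt (1 - (p \<bullet> x)\<^sup>2 - (p \<bullet> y)\<^sup>2)" "norm r' = sqrt (1 - (q \<bullet> x)\<^sup>2 - (q \<bullet> y)\<^sup>2)"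
    using residual_r(3) residual_r'(3) \<open>p \<bullet> p = 1\<close> \<open>q \<bullet> q = 1\<close> by (simp_all add: norm_eq_sqrt_inner)
  ultimately show ?thesis using that by simp
qed


context involutive_graph
begin

abbreviation generator :: "real \<Rightarrow> complex^'n^'n" where
  "generator t \<equiv> cscale_mat (\<i> * complex_of_real t) (hamiltonian E Q v v')"

lemma generator_nth: "generator t $ i $ j = \<i> * of_real t * of_real (ham i j)"
  by (auto simp: cscale_mat_def hamiltonian_def adj_matrix_def potential_matrix_def ham_def)

lemma generator_eigenvector:
  assumes "hmult z = l *\<^sub>R z"
  shows "generator t *v cvec z = (\<i> * of_real (t * l)) *s cvec z"
proof -
  have "(\<Sum>j\<in>UNIV. of_real (ham i j) * of_real (z $ j)) = (of_real (l * z $ i) :: complex)" for i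
  proof -
    have "(\<Sum>j\<in>UNIV. ham i j * z $ j) = l * z $ i"
      using arg_cong[OF assms, of "\<lambda>w. w $ i"] by (simp add: hmult_nth)
    then have "complex_of_real (\<Sum>j\<in>UNIV. ham i j * z $ j) = of_real (l * z $ i)" by simp
    then show ?thesis by (simp only: of_real_sum of_real_mult)
  qed
  then show ?thesis
    by (simp add: vec_eq_iff matrix_vector_mult_def generator_nth sum_distrib_left[symmetric] mult.assoc)
qed

lemma generator_skew: "cinner w (generator t *v r) = cinner ((- generator t) *v w) r"
proof -
  have "cinner w (generator t *v r)
      = (\<Sum>i\<in>UNIV. \<Sum>j\<in>UNIV. \<i> * of_real t * of_real (ham i j) * cnj (w $ i) * r $ j)"
    by (simp add: cinner_def matrix_vector_mult_def generator_nth sum_distrib_left mult_ac)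
  also have "\<dots> = (\<Sum>j\<in>UNIV. \<Sum>i\<in>UNIV. \<i> * of_real t * of_real (ham i j) * cnj (w $ i) * r $ j)"
    by (rule sum.swap)
  also have "\<dots> = cinner ((- generator t) *v w) r"
    by (simp add: cinner_def matrix_vector_mult_def generator_nth sum_distrib_right
        sum_distrib_left mult_ac kernel_sym)
  finally show ?thesis .
qed

lemma transfer_prob_eq_cinner:
  "transfer_prob E Q v v' t = (cmod (cinner (cvec (axis v 1)) (mat_exp (generator t) *v cvec (axis v' 1))))\<^sup>2"
  by (simp add: transfer_prob_def axis_eq_cvec[symmetric] matrix_vector_mult_axis_nth)

lemma transfer_prob_le_1: "transfer_prob E Q v v' t \<le> 1"
proof -
  have "cmod (cinner (cvec (axis v 1)) (mat_exp (generator t) *v cvec (axis v' 1))) \<le> 1"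
    using norm_cinner_le[of "cvec (axis v 1)" "mat_exp (generator t) *v cvec (axis v' 1)"]
    by (simp add: mat_exp_isometry[OF generator_skew] norm_cvec)
  then show ?thesis
    unfolding transfer_prob_eq_cinner by (simp add: power_le_one)
qed

text \<open>At the half period \<open>t = \<pi> / (lp - lm)\<close> the two modes interfere constructively at \<open>v\<close>.\<close>

lemma transfer_prob_at_half_period:
  assumes "x \<in> even_vecs" "norm x = 1" and eigx: "hmult x = lp *\<^sub>R x"
    and "y \<in> odd_vecs" "norm y = 1" and eigy: "hmult y = lm *\<^sub>R y"
    and half_period: "t * (lp - lm) = pi"
  shows "2 * ((x $ v)\<^sup>2 + (y $ v)\<^sup>2) - 1 \<le> sqrt (transfer_prob E Q v v' t)"
proof -
  define a where "a = x $ v"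
  define b where "b = y $ v"
  define e where "e = exp (\<i> * of_real (t * lp))"
  have "x $ v' = a" "y $ v' = - b"
    using \<open>x \<in> even_vecs\<close> \<open>y \<in> odd_vecs\<close> by (auto simp: a_def b_def even_vecs_def odd_vecs_def)
  have "x \<bullet> x = 1" "y \<bullet> y = 1"
    using \<open>norm x = 1\<close> \<open>norm y = 1\<close> by (simp_all add: power2_norm_eq_inner[symmetric])
  have "a\<^sup>2 + a\<^sup>2 \<le> 1" "b\<^sup>2 + b\<^sup>2 \<le> 1"
    using sq_v_le_inner[of x] sq_v_le_inner[of y] \<open>x \<bullet> x = 1\<close> \<open>y \<bullet> y = 1\<close>
      \<open>x $ v' = a\<close> \<open>y $ v' = - b\<close> by (simp_all add: a_def b_def)
  then have residual: "sqrt (1 - a\<^sup>2 - b\<^sup>2) * sqrt (1 - a\<^sup>2 - b\<^sup>2) = 1 - a\<^sup>2 - b\<^sup>2" by simp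
  obtain err where amplitude:
      "cinner (cvec (axis v 1)) (mat_exp (generator t) *v cvec (axis v' 1))
         = of_real (a * a) * e + of_real (b * - b) * exp (\<i> * of_real (t * lm)) + err"
    and err: "cmod err \<le> 1 - a\<^sup>2 - b\<^sup>2"
    using two_mode_amplitude[OF generator_skew generator_eigenvector[OF eigx] generator_eigenvector[OF eigy]
        \<open>x \<bullet> x = 1\<close> \<open>y \<bullet> y = 1\<close> even_odd_orthogonal[OF \<open>x \<in> even_vecs\<close> \<open>y \<in> odd_vecs\<close>],
        of "axis v 1" "axis v' 1"] residual moved
    by (auto simp: inner_axis' a_def b_def e_def \<open>x $ v' = a\<close> \<open>y $ v' = - b\<close>)
  have "exp (\<i> * of_real (t * lm)) = - e"
  proof -
    have "\<i> * of_real (t * lm) = \<i> * of_real (t * lp) - \<i> * of_real pi"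
      using half_period by (simp add: algebra_simps)
    then show ?thesis by (simp add: e_def exp_diff)
  qed
  then have "cinner (cvec (axis v 1)) (mat_exp (generator t) *v cvec (axis v' 1))
      = of_real (a\<^sup>2 + b\<^sup>2) * e + err"
    unfolding amplitude by (simp add: algebra_simps power2_eq_square)
  moreover have "cmod (of_real (a\<^sup>2 + b\<^sup>2) * e) = a\<^sup>2 + b\<^sup>2"
    unfolding e_def norm_mult norm_of_real norm_exp_i_times by simp
  ultimately have "a\<^sup>2 + b\<^sup>2 - cmod err
      \<le> cmod (cinner (cvec (axis v 1)) (mat_exp (generator t) *v cvec (axis v' 1)))"
    by (metis norm_diff_ineq)
  then show ?thesis
    using err by (simp add: transfer_prob_eq_cinner a_def b_def)
qed

end


section \<open>The transfer estimate\<close>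

lemma half_period_le:
  fixes b lp gap Q :: real
  assumes gap: "2 * b\<^sup>2 / ((real d)\<^sup>2 * lp ^ (d - 1)) \<le> gap" and "1 \<le> 4 * b\<^sup>2"
    and "1 \<le> lp" "lp \<le> 2 * Q" and "d > 0"
  shows "pi / gap \<le> 2 * pi * (real d)\<^sup>2 * 2 ^ (d - 1) * Q ^ (d - 1)"
proof -
  have "0 < 2 * b\<^sup>2 / ((real d)\<^sup>2 * lp ^ (d - 1))"
    using assms by (intro divide_pos_pos) auto
  then have "0 < gap * (2 * b\<^sup>2 / ((real d)\<^sup>2 * lp ^ (d - 1)))"
    using gap by (intro mult_pos_pos) auto
  then have "pi / gap \<le> pi / (2 * b\<^sup>2 / ((real d)\<^sup>2 * lp ^ (d - 1)))"
    by (rule divide_left_mono[OF gap pi_ge_zero])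
  also have "\<dots> = pi * ((real d)\<^sup>2 * lp ^ (d - 1)) / (2 * b\<^sup>2)" by simp
  also have "\<dots> \<le> pi * ((real d)\<^sup>2 * lp ^ (d - 1)) / (1 / 2)"
    using assms by (intro divide_left_mono) auto
  also have "\<dots> = 2 * pi * (real d)\<^sup>2 * lp ^ (d - 1)" by simp
  also have "\<dots> \<le> 2 * pi * (real d)\<^sup>2 * (2 * Q) ^ (d - 1)"
    using assms by (intro mult_left_mono power_mono) auto
  finally show ?thesis by (simp add: power_mult_distrib)
qed

lemma weight_sum_ge:
  fixes a b m Q :: real
  assumes "Q - 2 * m \<le> 2 * Q * a\<^sup>2" "Q - 2 * m \<le> 2 * Q * b\<^sup>2" "Q > 0"
  shows "1 - 4 * m / Q \<le> 2 * (a\<^sup>2 + b\<^sup>2) - 1"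
proof -
  have "Q - 4 * m \<le> (2 * (a\<^sup>2 + b\<^sup>2) - 1) * Q"
    using assms(1,2) by (simp add: algebra_simps)
  then have "(Q - 4 * m) / Q \<le> 2 * (a\<^sup>2 + b\<^sup>2) - 1" using \<open>Q > 0\<close> by (simp add: pos_divide_le_eq)
  moreover have "(Q - 4 * m) / Q = 1 - 4 * m / Q" using \<open>Q > 0\<close> by (simp add: diff_divide_distrib)
  ultimately show ?thesis by simp
qed

lemma prob_ge_of_sqrt_ge:
  fixes c p s :: real
  assumes "1 - c \<le> s" "s \<le> sqrt p" "c \<le> 1"
  shows "1 - 2 * c \<le> p"
proof -
  have "0 \<le> sqrt p" using assms by linarith
  then have "(1 - c)\<^sup>2 \<le> p"
    using power_mono[of "1 - c" "sqrt p" 2] assms by simp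
  then have "1 + c\<^sup>2 - 2 * c \<le> p" by (simp add: power2_diff)
  then show ?thesis
    using zero_le_power2[of c] by linarith
qed

lemma bound_less_of_large_potential:
  fixes m Q :: real
  assumes "m \<ge> 1" and "Q \<ge> 4 * m + 1"
  shows "1 - 16 * sqrt (m + 1) / sqrt Q < 1 - 8 * m / Q"
proof -
  have "0 < sqrt Q" using assms by simp
  have "sqrt m * sqrt m \<le> sqrt (m + 1) * sqrt Q"
    using assms by (intro mult_mono) auto
  then have "m \<le> sqrt (m + 1) * sqrt Q" using assms by simp
  then have "8 * m < 16 * sqrt (m + 1) * sqrt Q" using assms by linarith
  then have "8 * m / (sqrt Q * sqrt Q) < 16 * sqrt (m + 1) * sqrt Q / (sqrt Q * sqrt Q)"
    using \<open>0 < sqrt Q\<close> by (intro divide_strict_right_mono) auto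
  also have "\<dots> = 16 * sqrt (m + 1) / sqrt Q"
    using \<open>0 < sqrt Q\<close> by (intro nonzero_mult_divide_mult_cancel_right) simp
  finally show ?thesis using assms by simp
qed

lemma bound_negative_of_small_potential:
  fixes m Q :: real
  assumes "m \<ge> 1" and "Q \<ge> m" and "Q < 4 * m + 1"
  shows "1 - 16 * sqrt (m + 1) / sqrt Q < 0"
proof -
  have "sqrt Q < sqrt (256 * (m + 1))"
    using assms by (intro real_sqrt_less_mono) (auto simp: algebra_simps)
  also have "sqrt (256 * (m + 1)) = 16 * sqrt (m + 1)"
  proof -
    have "sqrt 256 = (16::real)" by (rule real_sqrt_unique) auto
    then show ?thesis by (simp only: real_sqrt_mult)
  qed
  finally show ?thesis using assms by (simp add: less_divide_eq)
qed

context involutive_graph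
begin

lemma max_degree_ge_1: "m \<ge> 1"
proof -
  have "E\<^sup>*\<^sup>* v v'" using connected unfolding connected_graph_def by blast
  then obtain w where "E v w"
    using moved by (metis converse_rtranclpE)
  then have "1 \<le> card {j. E v j}" by (auto simp: card_gt_0_iff Suc_le_eq)
  then show ?thesis using degree_le_max_degree[of v] by linarith
qed

lemma graph_dist_walk: "(E ^^ graph_dist E v v') v v'" and graph_dist_pos: "graph_dist E v v' > 0"
proof -
  have "E\<^sup>*\<^sup>* v v'" using connected unfolding connected_graph_def by blast
  then obtain n where "(E ^^ n) v v'" by (metis rtranclp_imp_relpowp)
  then show walk: "(E ^^ graph_dist E v v') v v'" unfolding graph_dist_def by (rule LeastI)
  show "graph_dist E v v' > 0"
    using walk moved by (cases "graph_dist E v v'") auto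
qed

lemma good_transfer_time:
  assumes "Q \<ge> 4 * m + 1"
  defines "d \<equiv> graph_dist E v v'"
  obtains t where "t \<ge> 0" "1 - 8 * m / Q \<le> transfer_prob E Q v v' t"
    "t \<le> 2 * pi * (real d)\<^sup>2 * 2 ^ (d - 1) * Q ^ (d - 1)"
proof -
  obtain x lp where "x \<in> even_vecs" "norm x = 1" and nonneg: "\<forall>i. x $ i \<ge> 0"
    and eigx: "hmult x = lp *\<^sub>R x" and "lp \<ge> Q - m"
    by (rule even_top_eigenvector)
  obtain y lm where "y \<in> odd_vecs" "norm y = 1" and eigy: "hmult y = lm *\<^sub>R y" and "lm \<ge> Q - m"
    by (rule odd_top_eigenvector)
  have "x $ v' = x $ v" "y $ v' = - y $ v"
    using \<open>x \<in> even_vecs\<close> \<open>y \<in> odd_vecs\<close> by (auto simp: even_vecs_def odd_vecs_def)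
  then have weights: "Q - 2 * m \<le> 2 * Q * (x $ v)\<^sup>2" "Q - 2 * m \<le> 2 * Q * (y $ v)\<^sup>2" "lp \<le> Q + m"
    using eigenvalue_le_weight[OF eigx \<open>norm x = 1\<close>] eigenvalue_le_weight[OF eigy \<open>norm y = 1\<close>]
      \<open>lp \<ge> Q - m\<close> \<open>lm \<ge> Q - m\<close> by auto
  have "m \<ge> 0" by simp
  then have "Q > 0" "1 \<le> lp" using assms(1) \<open>lp \<ge> Q - m\<close> by linarith+
  have "0 < 2 * Q * (x $ v)\<^sup>2" using weights(1) assms(1) \<open>m \<ge> 0\<close> by linarith
  then have "x $ v \<noteq> 0" by auto
  then have "x $ v > 0" using nonneg by (simp add: order_less_le)
  then have pos: "\<forall>i. x $ i > 0"
    using eigenvector_positive[OF eigx nonneg] \<open>1 \<le> lp\<close> by auto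
  have "Q * 1 \<le> Q * (4 * (y $ v)\<^sup>2)" using weights(2) assms(1) by linarith
  then have "1 \<le> 4 * (y $ v)\<^sup>2" using \<open>Q > 0\<close> by simp
  have amplitude: "1 - 4 * m / Q \<le> 2 * ((x $ v)\<^sup>2 + (y $ v)\<^sup>2) - 1"
    using weights(1,2) \<open>Q > 0\<close> by (rule weight_sum_ge)
  define t where "t = pi / (lp - lm)"
  have gap: "2 * (y $ v)\<^sup>2 / ((real d)\<^sup>2 * lp ^ (d - 1)) \<le> lp - lm"
    unfolding d_def using eigenvalue_gap_lower_bound[OF eigx pos \<open>x \<in> even_vecs\<close> eigy \<open>norm y = 1\<close>
        \<open>y \<in> odd_vecs\<close> graph_dist_walk graph_dist_pos] \<open>1 \<le> lp\<close> by simp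
  moreover have "0 < 2 * (y $ v)\<^sup>2 / ((real d)\<^sup>2 * lp ^ (d - 1))"
    using \<open>1 \<le> 4 * (y $ v)\<^sup>2\<close> \<open>1 \<le> lp\<close> graph_dist_pos
    by (intro divide_pos_pos mult_pos_pos) (auto simp: d_def)
  ultimately have "lp - lm > 0" by linarith
  then have "t \<ge> 0" "t * (lp - lm) = pi" by (simp_all add: t_def)
  moreover have "t \<le> 2 * pi * (real d)\<^sup>2 * 2 ^ (d - 1) * Q ^ (d - 1)"
    unfolding t_def using half_period_le[OF gap] \<open>1 \<le> 4 * (y $ v)\<^sup>2\<close> \<open>1 \<le> lp\<close> weights(3)
      assms(1) graph_dist_pos by (simp add: d_def)
  moreover have "4 * m / Q \<le> 1" using assms(1) \<open>Q > 0\<close> by simp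
  then have "1 - 2 * (4 * m / Q) \<le> transfer_prob E Q v v' t"
    using transfer_prob_at_half_period[OF \<open>x \<in> even_vecs\<close> \<open>norm x = 1\<close> eigx \<open>y \<in> odd_vecs\<close>
        \<open>norm y = 1\<close> eigy \<open>t * (lp - lm) = pi\<close>] amplitude
    by (intro prob_ge_of_sqrt_ge)
  ultimately show ?thesis using that by simp
qed

lemma exists_good_time:
  assumes "Q \<ge> m"
  defines "d \<equiv> graph_dist E v v'"
  obtains t where "t \<ge> 0" "1 - 16 * sqrt (m + 1) / sqrt Q < transfer_prob E Q v v' t"
    "Q \<ge> 4 * m + 1 \<Longrightarrow> t \<le> 2 * pi * (real d)\<^sup>2 * 2 ^ (d - 1) * Q ^ (d - 1)"
proof (cases "Q \<ge> 4 * m + 1")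
  case True
  obtain t where "t \<ge> 0" "1 - 8 * m / Q \<le> transfer_prob E Q v v' t"
    "t \<le> 2 * pi * (real d)\<^sup>2 * 2 ^ (d - 1) * Q ^ (d - 1)"
    unfolding d_def by (rule good_transfer_time[OF True])
  moreover have "1 - 16 * sqrt (m + 1) / sqrt Q < 1 - 8 * m / Q"
    by (rule bound_less_of_large_potential[OF max_degree_ge_1 True])
  ultimately show ?thesis using that[of t] by simp
next
  case False
  have "0 \<le> transfer_prob E Q v v' 0" by (simp add: transfer_prob_def)
  then show ?thesis
    using bound_negative_of_small_potential[OF max_degree_ge_1 assms(1)] False
    by (intro that[of 0]) auto
qed

end


theorem theorem2:
  fixes E :: "'n::finite \<Rightarrow> 'n \<Rightarrow> bool" and \<sigma> :: "'n \<Rightarrow> 'n" and v :: 'n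
  assumes "simple_graph E" and "connected_graph E"
    and "involution E \<sigma>" and "\<sigma> v \<noteq> v"
  shows "(\<forall>Q::real. Q \<ge> real (max_degree E) \<longrightarrow>
            fidelity E Q v (\<sigma> v) > 1 - 16 * sqrt (real (max_degree E) + 1) / sqrt Q)
       \<and> (\<exists>T :: real \<Rightarrow> real.
            (\<forall>Q. Q \<ge> real (max_degree E) \<longrightarrow> T Q \<ge> 0 \<and>
               transfer_prob E Q v (\<sigma> v) (T Q) > 1 - 16 * sqrt (real (max_degree E) + 1) / sqrt Q)
          \<and> T \<in> O[at_top](\<lambda>Q. Q ^ (graph_dist E v (\<sigma> v) - 1)))"
proof -
  define m where "m = real (max_degree E)"
  define d where "d = graph_dist E v (\<sigma> v)"
  define bound where "bound Q = 1 - 16 * sqrt (m + 1) / sqrt Q" for Q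
  define C where "C = 2 * pi * (real d)\<^sup>2 * 2 ^ (d - 1)"
  have graph: "involutive_graph E \<sigma> v Q" if "Q \<ge> m" for Q
    using assms that of_nat_0_le_iff by (fastforce simp: involutive_graph_def m_def)
  have "\<exists>t. Q \<ge> m \<longrightarrow> t \<ge> 0 \<and> bound Q < transfer_prob E Q v (\<sigma> v) t
      \<and> (Q \<ge> 4 * m + 1 \<longrightarrow> t \<le> C * Q ^ (d - 1))" for Q
    using involutive_graph.exists_good_time[OF graph, of Q]
    unfolding m_def d_def bound_def C_def by (metis mult.assoc)
  then obtain T where T: "\<And>Q. Q \<ge> m \<Longrightarrow> T Q \<ge> 0 \<and> bound Q < transfer_prob E Q v (\<sigma> v) (T Q)
      \<and> (Q \<ge> 4 * m + 1 \<longrightarrow> T Q \<le> C * Q ^ (d - 1))"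
    by metis
  have "bound Q < fidelity E Q v (\<sigma> v)" if "Q \<ge> m" for Q
  proof -
    have "transfer_prob E Q v (\<sigma> v) (T Q) \<le> fidelity E Q v (\<sigma> v)"
      unfolding fidelity_def using T[OF that] involutive_graph.transfer_prob_le_1[OF graph[OF that]]
      by (intro cSUP_upper bdd_aboveI2) auto
    then show ?thesis using T[OF that] by linarith
  qed
  moreover have "T \<in> O[at_top](\<lambda>Q. Q ^ (d - 1))"
  proof (intro bigoI[where c = C] eventually_at_top_linorderI[of "4 * m + 1"])
    fix Q assume "Q \<ge> 4 * m + 1"
    moreover have "m \<ge> 0" by (simp add: m_def)
    ultimately show "norm (T Q) \<le> C * norm (Q ^ (d - 1))" using T[of Q] by auto
  qed
  ultimately show ?thesis using T unfolding m_def d_def bound_def by blast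
qed

end
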